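(* Let $A\in\mathbb{C}^{n\times n}$, let $\|\cdot\|$ be any vector norm on $\mathbb{C}^n$ with induced matrix norm, and let $y_0\in\mathbb{C}^n\setminus\{0\}$. Then $$\max_{\hat z_0\in\mathbb{C}^n,\ \|\hat z_0\|=1}\ \limsup_{t\to+\infty}\frac{K(t,y_0,\hat z_0)}{K(t,y_0)}=1 .$$ Moreover, if $y_0$ satisfies the RLGE condition, then, with $K_\infty(t,y_0,\hat z_0)=\|Q_1(t)\hat z_0\|/\|Q_1(t)\hat y_0\|$ and $K_\infty(t,y_0)=\|Q_1(t)\|/\|Q_1(t)\hat y_0\|$, $$\max_{\hat z_0\in\mathbb{C}^n,\ \|\hat z_0\|=1}\ \limsup_{t\to+\infty}\frac{K_\infty(t,y_0,\hat z_0)}{K_\infty(t,y_0)}=1 .$$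
   Context: $\hat y_0=y_0/\|y_0\|$; $K(t,y_0,\hat z_0)=\|e^{tA}\hat z_0\|/\|e^{tA}\hat y_0\|$ and $K(t,y_0)=\|e^{tA}\|/\|e^{tA}\hat y_0\|$. Let $\lambda_1,\dots,\lambda_p$ be the distinct eigenvalues of $A$, $\omega_i=\operatorname{Im}\lambda_i$. Fix a Jordan basis $v^{(i,j,k)}$ ($i\le p$, $j\le d_i$ with $d_i$ the geometric multiplicity, $k\le m_{ij}$) of Jordan chains: $(A-\lambda_iI)v^{(i,j,1)}=0$, $(A-\lambda_iI)v^{(i,j,k)}=v^{(i,j,k-1)}$ for $k\ge2$; $V$ the matrix of these columns in lexicographic order, $w^{(i,j,k)}$ the rows of $V^{-1}$; $\alpha_{ijk}(u)=w^{(i,j,k)}u$. $\Lambda_1$ is the set of eigenvalues of maximal real part, $M_1=\max_{\lambda_i\in\Lambda_1}\max_j m_{ij}$, $Q_1(t)=\sum_{\lambda_i\in\Lambda_1, m_{ij}=M_1}e^{\sqrt{-1}\omega_it}v^{(i,j,1)}w^{(i,j,M_1)}$. $u$ satisfies RLGE if $\alpha_{ijM_1}(u)\ne0$ for some $(i,j)$ with $\lambda_i\in\Lambda_1$, $m_{ij}=M_1$. *)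

theory Defs
  imports "HOL-Analysis.Analysis"
begin

definition mpow :: "complex^'n^'n \<Rightarrow> nat \<Rightarrow> complex^'n^'n" where
  "mpow A k = (((**) A) ^^ k) (mat 1)"

definition mexp :: "real \<Rightarrow> complex^'n^'n \<Rightarrow> complex^'n^'n" where
  "mexp t A = (\<Sum>k. (t ^ k / fact k) *\<^sub>R mpow A k)"

definition is_vec_norm :: "(complex^'n \<Rightarrow> real) \<Rightarrow> bool" where
  "is_vec_norm N \<longleftrightarrow>
     (\<forall>x. 0 \<le> N x) \<and> (\<forall>x. N x = 0 \<longleftrightarrow> x = 0) \<and>
     (\<forall>c x. N (c *s x) = cmod c * N x) \<and> (\<forall>x y. N (x + y) \<le> N x + N y)"

definition ind_norm :: "(complex^'n \<Rightarrow> real) \<Rightarrow> complex^'n^'n \<Rightarrow> real" where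
  "ind_norm N M = Sup {N (M *v x) | x. N x = 1}"

definition rowmul :: "complex^'n \<Rightarrow> complex^'n \<Rightarrow> complex" where
  "rowmul w u = (\<Sum>k\<in>UNIV. w $ k * u $ k)"

definition outer :: "complex^'n \<Rightarrow> complex^'n \<Rightarrow> complex^'n^'n" where
  "outer v w = (\<chi> a b. v $ a * w $ b)"

definition normalize :: "(complex^'n \<Rightarrow> real) \<Rightarrow> complex^'n \<Rightarrow> complex^'n" where
  "normalize N y = (complex_of_real (1 / N y)) *s y"

definition K3 :: "(complex^'n \<Rightarrow> real) \<Rightarrow> complex^'n^'n \<Rightarrow> real \<Rightarrow> complex^'n \<Rightarrow> complex^'n \<Rightarrow> real" where
  "K3 N A t y0 z0 = N (mexp t A *v z0) / N (mexp t A *v normalize N y0)"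

definition K2 :: "(complex^'n \<Rightarrow> real) \<Rightarrow> complex^'n^'n \<Rightarrow> real \<Rightarrow> complex^'n \<Rightarrow> real" where
  "K2 N A t y0 = ind_norm N (mexp t A) / N (mexp t A *v normalize N y0)"

(* Jordan data: eigenvalues lam i (i = 1..p), chains j = 1..d i of length m i j,
   chain vectors v i j k, dual rows w i j k (rows of V^{-1}). *)

definition maxRe :: "nat \<Rightarrow> (nat \<Rightarrow> complex) \<Rightarrow> real" where
  "maxRe p lam = Max ((\<lambda>i. Re (lam i)) ` {1..p})"

definition Lam1 :: "nat \<Rightarrow> (nat \<Rightarrow> complex) \<Rightarrow> nat set" where
  "Lam1 p lam = {i \<in> {1..p}. Re (lam i) = maxRe p lam}"

definition M1 :: "nat \<Rightarrow> (nat \<Rightarrow> complex) \<Rightarrow> (nat \<Rightarrow> nat) \<Rightarrow> (nat \<Rightarrow> nat \<Rightarrow> nat) \<Rightarrow> nat" where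
  "M1 p lam d m = Max {m i j | i j. i \<in> Lam1 p lam \<and> j \<in> {1..d i}}"

definition top_chains :: "nat \<Rightarrow> (nat \<Rightarrow> complex) \<Rightarrow> (nat \<Rightarrow> nat) \<Rightarrow> (nat \<Rightarrow> nat \<Rightarrow> nat) \<Rightarrow> (nat \<times> nat) set" where
  "top_chains p lam d m = {(i, j). i \<in> Lam1 p lam \<and> j \<in> {1..d i} \<and> m i j = M1 p lam d m}"

definition Q1 :: "nat \<Rightarrow> (nat \<Rightarrow> complex) \<Rightarrow> (nat \<Rightarrow> nat) \<Rightarrow> (nat \<Rightarrow> nat \<Rightarrow> nat)
    \<Rightarrow> (nat \<Rightarrow> nat \<Rightarrow> nat \<Rightarrow> complex^'n) \<Rightarrow> (nat \<Rightarrow> nat \<Rightarrow> nat \<Rightarrow> complex^'n) \<Rightarrow> real \<Rightarrow> complex^'n^'n" where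
  "Q1 p lam d m v w t = (\<Sum>(i, j)\<in>top_chains p lam d m.
      outer (exp (\<i> * complex_of_real (Im (lam i) * t)) *s v i j 1) (w i j (M1 p lam d m)))"

definition RLGE :: "nat \<Rightarrow> (nat \<Rightarrow> complex) \<Rightarrow> (nat \<Rightarrow> nat) \<Rightarrow> (nat \<Rightarrow> nat \<Rightarrow> nat)
    \<Rightarrow> (nat \<Rightarrow> nat \<Rightarrow> nat \<Rightarrow> complex^'n) \<Rightarrow> complex^'n \<Rightarrow> bool" where
  "RLGE p lam d m w u \<longleftrightarrow> (\<exists>(i, j)\<in>top_chains p lam d m. rowmul (w i j (M1 p lam d m)) u \<noteq> 0)"

definition Kinf3 :: "(complex^'n \<Rightarrow> real) \<Rightarrow> nat \<Rightarrow> (nat \<Rightarrow> complex) \<Rightarrow> (nat \<Rightarrow> nat) \<Rightarrow> (nat \<Rightarrow> nat \<Rightarrow> nat)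
    \<Rightarrow> (nat \<Rightarrow> nat \<Rightarrow> nat \<Rightarrow> complex^'n) \<Rightarrow> (nat \<Rightarrow> nat \<Rightarrow> nat \<Rightarrow> complex^'n) \<Rightarrow> real \<Rightarrow> complex^'n \<Rightarrow> complex^'n \<Rightarrow> real" where
  "Kinf3 N p lam d m v w t y0 z0 =
     N (Q1 p lam d m v w t *v z0) / N (Q1 p lam d m v w t *v normalize N y0)"

definition Kinf2 :: "(complex^'n \<Rightarrow> real) \<Rightarrow> nat \<Rightarrow> (nat \<Rightarrow> complex) \<Rightarrow> (nat \<Rightarrow> nat) \<Rightarrow> (nat \<Rightarrow> nat \<Rightarrow> nat)
    \<Rightarrow> (nat \<Rightarrow> nat \<Rightarrow> nat \<Rightarrow> complex^'n) \<Rightarrow> (nat \<Rightarrow> nat \<Rightarrow> nat \<Rightarrow> complex^'n) \<Rightarrow> real \<Rightarrow> complex^'n \<Rightarrow> real" where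
  "Kinf2 N p lam d m v w t y0 =
     ind_norm N (Q1 p lam d m v w t) / N (Q1 p lam d m v w t *v normalize N y0)"

end

theory Submission
  imports Defs
begin

text \<open>
  For M(t) = e^(tA) or M(t) = Q1(t), the ratio K(t,y0,z0) / K(t,y0) equals the gain
  N(M(t) z0) / ||M(t)|| as soon as M(t) y0 is nonzero, and the gain is at most 1 on the unit
  sphere. Nonvanishing holds for every t: e^(tA) is invertible, and under RLGE the dual row
  w(i,j,1) extracts e^(i omega_i t) alpha_ijM1(y0), which is nonzero, from Q1(t) y0. Along
  times t_k tending to infinity choose unit vectors z_k whose gain tends to 1. The gain is
  1-Lipschitz in z with respect to N, so a limit point z of the z_k on the compact unit sphere
  also has gain tending to 1 along a subsequence, and its limsup is 1.
\<close>

lemma of_real_smult_eq_scaleR: "complex_of_real c *s x = c *\<^sub>R x"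
  unfolding vec_eq_iff vector_smult_component vector_scaleR_component
  by (simp add: scaleR_conv_of_real)

lemma Limsup_mono_filter: "F \<le> G \<Longrightarrow> Limsup F f \<le> Limsup G f"
  unfolding Limsup_def le_filter_def by (auto intro!: INF_mono)

lemma tendsto_along_le_Limsup:
  fixes f :: "'a \<Rightarrow> 'b::{complete_linorder, linorder_topology}"
  assumes "filterlim s F sequentially" "((\<lambda>k. f (s k)) \<longlongrightarrow> l) sequentially"
  shows "l \<le> Limsup F f"
proof -
  have "l = Limsup sequentially (\<lambda>k. f (s k))"
    using lim_imp_Limsup[OF _ assms(2)] by simp
  also have "\<dots> \<le> Limsup (filtermap s sequentially) f"
    by (rule Limsup_filtermap_ge)
  also have "\<dots> \<le> Limsup F f"
    using assms(1) unfolding filterlim_def by (rule Limsup_mono_filter)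
  finally show ?thesis .
qed

definition gain :: "(complex^'n \<Rightarrow> real) \<Rightarrow> complex^'n^'n \<Rightarrow> complex^'n \<Rightarrow> real"
  where "gain N M z = N (M *v z) / ind_norm N M"

text \<open>K(t,y0,z0) / K(t,y0) with e^(tA) replaced by an arbitrary matrix M and y0/||y0|| by u.\<close>
definition cond_ratio ::
    "(complex^'n \<Rightarrow> real) \<Rightarrow> complex^'n^'n \<Rightarrow> complex^'n \<Rightarrow> complex^'n \<Rightarrow> real"
  where "cond_ratio N M u z = (N (M *v z) / N (M *v u)) / (ind_norm N M / N (M *v u))"

context
  fixes N :: "complex^'n \<Rightarrow> real"
  assumes N: "is_vec_norm N"
begin

lemma N_nonneg: "0 \<le> N x"
  using N by (simp add: is_vec_norm_def)

lemma N_eq_0_iff: "N x = 0 \<longleftrightarrow> x = 0"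
  using N by (simp add: is_vec_norm_def)

lemma N_smult: "N (c *s x) = cmod c * N x"
  using N by (simp add: is_vec_norm_def)

lemma N_triangle: "N (x + y) \<le> N x + N y"
  using N by (simp add: is_vec_norm_def)

lemma N_0 [simp]: "N 0 = 0"
  by (simp add: N_eq_0_iff)

lemma N_pos: "x \<noteq> 0 \<Longrightarrow> 0 < N x"
  using N_nonneg N_eq_0_iff by (metis less_eq_real_def)

lemma N_diff_le: "N x - N y \<le> N (x - y)"
  using N_triangle[of "x - y" y] by simp

lemma N_sum_le: "finite S \<Longrightarrow> N (sum f S) \<le> (\<Sum>i\<in>S. N (f i))"
proof (induction S rule: finite_induct)
  case (insert a S)
  then show ?case
    using N_triangle[of "f a" "sum f S"] by simp
qed simp

lemma N_normalize: "x \<noteq> 0 \<Longrightarrow> N (normalize N x) = 1"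
  using N_pos[of x] by (simp add: normalize_def N_smult norm_divide)

lemma ex_N_unit: "\<exists>x. N x = 1"
  using N_normalize[of "axis undefined 1"] by auto

lemma N_le_norm: "\<exists>C\<ge>0. \<forall>x. N x \<le> C * norm x"
proof (intro exI[of _ "\<Sum>i\<in>UNIV. N (axis i 1)"] conjI allI)
  show "0 \<le> (\<Sum>i\<in>UNIV. N (axis i 1))"
    by (simp add: sum_nonneg N_nonneg)
  fix x
  have "N x = N (\<Sum>i\<in>UNIV. x $ i *s axis i 1)"
    by (simp add: basis_expansion)
  also have "\<dots> \<le> (\<Sum>i\<in>UNIV. cmod (x $ i) * N (axis i 1))"
    by (rule order_trans[OF N_sum_le]) (simp_all add: N_smult)
  also have "\<dots> \<le> (\<Sum>i\<in>UNIV. norm x * N (axis i 1))"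
    by (intro sum_mono mult_right_mono Finite_Cartesian_Product.norm_nth_le N_nonneg)
  finally show "N x \<le> (\<Sum>i\<in>UNIV. N (axis i 1)) * norm x"
    by (simp add: sum_distrib_left mult.commute)
qed

lemma continuous_on_N: "continuous_on S N"
proof -
  obtain C where C: "C \<ge> 0" "\<And>x. N x \<le> C * norm x"
    using N_le_norm by blast
  have "C-lipschitz_on S N"
    unfolding lipschitz_on_def
  proof (intro conjI ballI C(1))
    fix x y
    have "N x - N y \<le> C * norm (x - y)"
      using N_diff_le C(2) order_trans by blast
    moreover have "N y - N x \<le> C * norm (x - y)"
      using N_diff_le[of y x] C(2)[of "y - x"] by (simp add: norm_minus_commute)
    ultimately show "dist (N x) (N y) \<le> C * dist x y"
      by (simp add: dist_norm abs_le_iff)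
  qed
  then show ?thesis
    by (rule lipschitz_on_continuous_on)
qed

lemma norm_le_N: "\<exists>c>0. \<forall>x. c * norm x \<le> N x"
proof -
  obtain x0 where x0: "x0 \<in> sphere 0 1" "\<And>y. y \<in> sphere 0 1 \<Longrightarrow> N x0 \<le> N y"
    using continuous_attains_inf[OF compact_sphere _ continuous_on_N, of 0 1] by auto
  show ?thesis
  proof (intro exI[of _ "N x0"] conjI allI)
    show "0 < N x0"
      using x0(1) by (intro N_pos) auto
    fix x :: "complex^'n"
    show "N x0 * norm x \<le> N x"
    proof (cases "x = 0")
      case False
      define y where "y = (1 / norm x) *\<^sub>R x"
      have "norm y = 1"
        using False by (simp add: y_def)
      then have "N x0 \<le> N y"
        using x0(2) by simp
      also have "N y = N x / norm x"
        unfolding y_def of_real_smult_eq_scaleR[symmetric] N_smult by (simp add: norm_divide)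
      finally show ?thesis
        using False by (simp add: field_simps)
    qed simp
  qed
qed

lemma compact_N_sphere: "compact {x. N x = 1}"
proof -
  obtain c where c: "c > 0" "\<And>x. c * norm x \<le> N x"
    using norm_le_N by blast
  have "bounded {x. N x = 1}"
    unfolding bounded_iff
  proof (intro exI[of _ "1 / c"] ballI)
    fix x assume "x \<in> {x. N x = 1}"
    then show "norm x \<le> 1 / c"
      using c(2)[of x] c(1) by (simp add: field_simps)
  qed
  moreover have "closed {x. N x = 1}"
    by (intro closed_Collect_eq continuous_on_N continuous_on_const)
  ultimately show ?thesis
    by (simp add: compact_eq_bounded_closed)
qed

lemma N_matrix_vector_le: "\<exists>K. \<forall>x. N (M *v x) \<le> K * N x"
proof -
  obtain c where c: "c > 0" "\<And>x. c * norm x \<le> N x"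
    using norm_le_N by blast
  obtain C where C: "C \<ge> 0" "\<And>x. N x \<le> C * norm x"
    using N_le_norm by blast
  obtain K where K: "K \<ge> 0" "\<And>x. norm (M *v x) \<le> norm x * K"
    using bounded_linear.nonneg_bounded matrix_vector_mul_bounded_linear by blast
  have "N (M *v x) \<le> C * K / c * N x" for x
  proof -
    have "N (M *v x) \<le> C * (norm x * K)"
      using C(2)[of "M *v x"] mult_left_mono[OF K(2)[of x] C(1)] by linarith
    also have "\<dots> \<le> C * (N x / c * K)"
      using c(2)[of x] c(1) C(1) K(1)
      by (intro mult_left_mono mult_right_mono) (simp_all add: pos_le_divide_eq mult.commute)
    finally show ?thesis
      by (simp add: mult_ac)
  qed
  then show ?thesis
    by blast
qed

lemma bdd_above_ind_norm: "bdd_above {N (M *v x) | x. N x = 1}"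
proof -
  obtain K where "\<And>x. N (M *v x) \<le> K * N x"
    using N_matrix_vector_le by blast
  then show ?thesis
    unfolding bdd_above_def by (auto, metis mult.right_neutral)
qed

lemma ind_norm_upper: "N x = 1 \<Longrightarrow> N (M *v x) \<le> ind_norm N M"
  unfolding ind_norm_def by (rule cSup_upper[OF _ bdd_above_ind_norm]) blast

lemma N_le_ind_norm: "N (M *v x) \<le> ind_norm N M * N x"
proof (cases "x = 0")
  case False
  define y where "y = normalize N x"
  have "N y = 1"
    using False by (simp add: y_def N_normalize)
  then have "N (M *v y) \<le> ind_norm N M"
    by (rule ind_norm_upper)
  moreover have "M *v y = complex_of_real (1 / N x) *s (M *v x)"
    by (simp add: y_def normalize_def vector_scalar_commute)
  ultimately show ?thesis
    using N_pos[OF False] by (simp add: N_smult norm_divide field_simps)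
qed simp

lemma ind_norm_approx: "e > 0 \<Longrightarrow> \<exists>x. N x = 1 \<and> ind_norm N M - e < N (M *v x)"
  using less_cSupD[of "{N (M *v x) | x. N x = 1}" "ind_norm N M - e"] ex_N_unit
  unfolding ind_norm_def by auto

lemma ind_norm_pos:
  assumes "M *v u \<noteq> 0"
  shows "0 < ind_norm N M"
proof (rule ccontr)
  assume "\<not> 0 < ind_norm N M"
  then have "ind_norm N M * N u \<le> 0"
    using N_nonneg[of u] by (simp add: mult_nonpos_nonneg)
  then show False
    using N_pos[OF assms] N_le_ind_norm[of M u] by linarith
qed

lemma gain_le_1: "N z = 1 \<Longrightarrow> gain N M z \<le> 1"
  using ind_norm_upper[of z M] N_nonneg[of "M *v z"]
  by (cases "ind_norm N M = 0") (simp_all add: gain_def divide_le_eq_1)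

lemma gain_lipschitz:
  assumes "0 < ind_norm N M"
  shows "gain N M z - gain N M z' \<le> N (z - z')"
proof -
  have "N (M *v z) - N (M *v z') \<le> N (M *v (z - z'))"
    using N_diff_le by (simp add: matrix_vector_mult_diff_distrib)
  also have "\<dots> \<le> ind_norm N M * N (z - z')"
    by (rule N_le_ind_norm)
  finally show ?thesis
    using assms by (simp add: gain_def diff_divide_distrib[symmetric] divide_le_eq mult.commute)
qed

lemma gain_approx:
  assumes "0 < ind_norm N M" "e > 0"
  shows "\<exists>z. N z = 1 \<and> 1 - e < gain N M z"
proof -
  obtain z where "N z = 1" "ind_norm N M - e * ind_norm N M < N (M *v z)"
    using ind_norm_approx[of "e * ind_norm N M" M] assms by auto
  then show ?thesis
    using assms(1) by (intro exI[of _ z]) (simp add: gain_def field_simps)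
qed

lemma gain_tendsto_1_subseq:
  fixes Ms :: "nat \<Rightarrow> complex^'n^'n"
  assumes "\<And>k. 0 < ind_norm N (Ms k)"
  obtains z r where "N z = 1" "strict_mono r" "(\<lambda>k. gain N (Ms (r k)) z) \<longlonglongrightarrow> 1"
proof -
  have "\<exists>z. N z = 1 \<and> 1 - inverse (real (Suc k)) < gain N (Ms k) z" for k
    by (rule gain_approx[OF assms]) simp
  then obtain zs where zs: "\<And>k. N (zs k) = 1"
      "\<And>k. 1 - inverse (real (Suc k)) < gain N (Ms k) (zs k)"
    using choice[of "\<lambda>k z. N z = 1 \<and> 1 - inverse (real (Suc k)) < gain N (Ms k) z"] by blast
  have "\<forall>k. zs k \<in> {x. N x = 1}"
    using zs(1) by simp
  then obtain z r where "z \<in> {x. N x = 1}" and r: "strict_mono r" and lim: "(zs \<circ> r) \<longlonglongrightarrow> z"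
    by (rule seq_compactE[OF compact_imp_seq_compact[OF compact_N_sphere]])
  then have z: "N z = 1"
    by simp
  define e where "e k = inverse (real (Suc (r k))) + N (zs (r k) - z)" for k
  have lower: "1 - e k < gain N (Ms (r k)) z" for k
    using zs(2)[of "r k"] gain_lipschitz[OF assms, of "r k" "zs (r k)" z]
    unfolding e_def by linarith
  have "(\<lambda>k. inverse (real (Suc (r k)))) \<longlonglongrightarrow> 0"
    using LIMSEQ_subseq_LIMSEQ[OF LIMSEQ_inverse_real_of_nat r] by (simp add: o_def)
  moreover have "(\<lambda>k. N (zs (r k) - z)) \<longlonglongrightarrow> N 0"
    using lim by (intro continuous_on_tendsto_compose[OF continuous_on_N[of UNIV]])
      (auto simp: o_def LIM_zero)
  ultimately have lim_lower: "(\<lambda>k. 1 - e k) \<longlonglongrightarrow> 1"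
    unfolding e_def using tendsto_diff[OF tendsto_const tendsto_add] by fastforce
  have "(\<lambda>k. gain N (Ms (r k)) z) \<longlonglongrightarrow> 1"
    using lower gain_le_1[OF z] less_imp_le
    by (intro tendsto_sandwich[OF always_eventually always_eventually lim_lower tendsto_const]) blast+
  with z r show ?thesis
    using that by blast
qed

lemma cond_ratio_eq_gain: "M *v u \<noteq> 0 \<Longrightarrow> cond_ratio N M u z = gain N M z"
  using N_pos[of "M *v u"] by (simp add: cond_ratio_def gain_def)

lemma cond_ratio_le_1:
  assumes "N z = 1"
  shows "cond_ratio N M u z \<le> 1"
proof (cases "M *v u = 0")
  case True
  then show ?thesis
    by (simp add: cond_ratio_def)
next
  case False
  then show ?thesis
    using gain_le_1[OF assms] by (simp add: cond_ratio_eq_gain)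
qed

lemma max_Limsup_cond_ratio_eq_1:
  fixes M :: "real \<Rightarrow> complex^'n^'n"
  assumes "\<exists>\<^sub>F t in at_top. M t *v u \<noteq> 0"
  shows "let S = (\<lambda>z. Limsup at_top (\<lambda>t. ereal (cond_ratio N (M t) u z))) ` {z. N z = 1}
    in 1 \<in> S \<and> (\<forall>s\<in>S. s \<le> 1)"
proof -
  have "\<exists>t. real k \<le> t \<and> M t *v u \<noteq> 0" for k
    using assms by (auto simp: frequently_def eventually_at_top_linorder)
  then obtain s where s: "\<And>k. real k \<le> s k" "\<And>k. M (s k) *v u \<noteq> 0"
    using choice[of "\<lambda>k t. real k \<le> t \<and> M t *v u \<noteq> 0"] by blast
  obtain z r where z: "N z = 1" and r: "strict_mono r"
    and lim: "(\<lambda>k. gain N (M (s (r k))) z) \<longlonglongrightarrow> 1"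
    using gain_tendsto_1_subseq[of "\<lambda>k. M (s k)"] ind_norm_pos[OF s(2)] by blast
  have "filterlim s at_top sequentially"
    using s(1) by (intro filterlim_at_top_mono[OF filterlim_real_sequentially]) auto
  then have "filterlim (\<lambda>k. s (r k)) at_top sequentially"
    using filterlim_compose filterlim_subseq[OF r] by blast
  moreover have "(\<lambda>k. ereal (cond_ratio N (M (s (r k))) u z)) \<longlonglongrightarrow> 1"
    using lim by (simp add: cond_ratio_eq_gain[OF s(2)] one_ereal_def)
  ultimately have "1 \<le> Limsup at_top (\<lambda>t. ereal (cond_ratio N (M t) u z))"
    by (rule tendsto_along_le_Limsup)
  moreover have "Limsup at_top (\<lambda>t. ereal (cond_ratio N (M t) u z')) \<le> 1"
    if "N z' = 1" for z'
    using cond_ratio_le_1[OF that] by (intro Limsup_bounded always_eventually) simp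
  ultimately show ?thesis
    using z by (auto simp: Let_def intro!: image_eqI[of _ _ z] antisym)
qed

end

lemma sums_vec:
  fixes f :: "nat \<Rightarrow> 'a::real_normed_vector^'n"
  assumes "\<And>i. (\<lambda>k. f k $ i) sums (L $ i)"
  shows "f sums L"
proof -
  have "(\<Sum>k<n. f k) = (\<chi> i. \<Sum>k<n. f k $ i)" for n
    by (simp add: vec_eq_iff)
  moreover have "(\<lambda>n. \<chi> i. \<Sum>k<n. f k $ i) \<longlonglongrightarrow> (\<chi> i. L $ i)"
    using assms unfolding sums_def by (intro tendsto_vec_lambda)
  ultimately show ?thesis
    unfolding sums_def by simp
qed

lemma mpow_0: "mpow A 0 = mat 1"
  by (simp add: mpow_def)

lemma mpow_Suc: "mpow A (Suc k) = A ** mpow A k"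
  by (simp add: mpow_def)

lemma mpow_add: "mpow A (a + b) = mpow A a ** mpow A b"
  by (induction a) (simp_all add: mpow_0 mpow_Suc matrix_mul_assoc)

lemma norm_mpow_entry_le:
  fixes A :: "complex^'n^'n"
  shows "cmod (mpow A k $ i $ j) \<le> (\<Sum>a\<in>UNIV. \<Sum>b\<in>UNIV. cmod (A $ a $ b)) ^ k"
proof (induction k arbitrary: i j)
  case 0
  then show ?case
    by (simp add: mpow_0 mat_def)
next
  case (Suc k)
  define B where "B = (\<Sum>a\<in>UNIV. \<Sum>b\<in>UNIV. cmod (A $ a $ b))"
  have "cmod (mpow A (Suc k) $ i $ j) = cmod (\<Sum>l\<in>UNIV. A $ i $ l * mpow A k $ l $ j)"
    by (simp add: mpow_Suc matrix_matrix_mult_def)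
  also have "\<dots> \<le> (\<Sum>l\<in>UNIV. cmod (A $ i $ l) * B ^ k)"
    using Suc by (intro order_trans[OF norm_sum] sum_mono) (simp add: B_def norm_mult mult_left_mono)
  also have "\<dots> = (\<Sum>l\<in>UNIV. cmod (A $ i $ l)) * B ^ k"
    by (simp add: sum_distrib_right)
  also have "\<dots> \<le> B * B ^ k"
    unfolding B_def
    by (intro mult_right_mono member_le_sum[of i UNIV "\<lambda>a. \<Sum>b\<in>UNIV. cmod (A $ a $ b)", simplified])
      (simp_all add: sum_nonneg)
  finally show ?case
    by (simp add: B_def)
qed

lemma summable_norm_mexp_entry:
  fixes A :: "complex^'n^'n"
  shows "summable (\<lambda>k. norm ((t ^ k / fact k) *\<^sub>R mpow A k $ i $ j))"
proof -
  define B where "B = (\<Sum>a\<in>UNIV. \<Sum>b\<in>UNIV. cmod (A $ a $ b))"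
  have "norm ((t ^ k / fact k) *\<^sub>R mpow A k $ i $ j) \<le> inverse (fact k) * (\<bar>t\<bar> * B) ^ k" for k
  proof -
    have "norm ((t ^ k / fact k) *\<^sub>R mpow A k $ i $ j) = \<bar>t\<bar> ^ k / fact k * cmod (mpow A k $ i $ j)"
      by (simp add: power_abs)
    also have "\<dots> \<le> \<bar>t\<bar> ^ k / fact k * B ^ k"
      by (intro mult_left_mono) (simp_all add: norm_mpow_entry_le B_def)
    also have "\<dots> = inverse (fact k) * (\<bar>t\<bar> * B) ^ k"
      by (simp add: field_simps)
    finally show ?thesis .
  qed
  then show ?thesis
    by (intro summable_comparison_test[OF _ summable_exp[of "\<bar>t\<bar> * B"]]) auto
qed

lemma mexp_entry:
  fixes A :: "complex^'n^'n"
  shows "mexp t A $ i $ j = (\<Sum>k. (t ^ k / fact k) *\<^sub>R mpow A k $ i $ j)"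
proof -
  have "(\<lambda>k. (t ^ k / fact k) *\<^sub>R mpow A k) sums
      (\<chi> i j. \<Sum>k. (t ^ k / fact k) *\<^sub>R mpow A k $ i $ j)"
    by (intro sums_vec) (simp add: summable_sums summable_norm_cancel[OF summable_norm_mexp_entry])
  then show ?thesis
    unfolding mexp_def by (simp add: sums_unique[symmetric])
qed

lemma Cauchy_product_mexp_entry:
  fixes A :: "complex^'n^'n"
  shows "(\<Sum>l\<in>UNIV. \<Sum>q\<le>n. ((s ^ q / fact q) *\<^sub>R mpow A q $ i $ l) *
            ((t ^ (n - q) / fact (n - q)) *\<^sub>R mpow A (n - q) $ l $ j))
       = ((s + t) ^ n / fact n) *\<^sub>R mpow A n $ i $ j"
proof -
  have "(\<Sum>l\<in>UNIV. \<Sum>q\<le>n. ((s ^ q / fact q) *\<^sub>R mpow A q $ i $ l) *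
            ((t ^ (n - q) / fact (n - q)) *\<^sub>R mpow A (n - q) $ l $ j))
      = (\<Sum>q\<le>n. (s ^ q / fact q * (t ^ (n - q) / fact (n - q))) *\<^sub>R
           (mpow A q ** mpow A (n - q)) $ i $ j)"
    by (subst sum.swap) (simp add: matrix_matrix_mult_def scaleR_sum_right algebra_simps)
  also have "\<dots> = (\<Sum>q\<le>n. (s ^ q / fact q * (t ^ (n - q) / fact (n - q))) *\<^sub>R mpow A n $ i $ j)"
    by (intro sum.cong refl) (simp add: mpow_add[symmetric])
  also have "\<dots> = ((s + t) ^ n / fact n) *\<^sub>R mpow A n $ i $ j"
    using exp_series_add_commuting[of s t n]
    by (simp add: scaleR_sum_left[symmetric] divide_inverse mult.commute)
  finally show ?thesis .
qed

lemma mexp_add: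
  fixes A :: "complex^'n^'n"
  shows "mexp s A ** mexp t A = mexp (s + t) A"
proof -
  have "mexp (s + t) A $ i $ j = (mexp s A ** mexp t A) $ i $ j" for i j
  proof -
    define a where "a l k = (s ^ k / fact k) *\<^sub>R mpow A k $ i $ l" for l k
    define b where "b l k = (t ^ k / fact k) *\<^sub>R mpow A k $ l $ j" for l k
    have "(\<lambda>n. \<Sum>l\<in>UNIV. \<Sum>q\<le>n. a l q * b l (n - q)) sums
        (\<Sum>l\<in>UNIV. (\<Sum>k. a l k) * (\<Sum>k. b l k))"
      unfolding a_def b_def by (intro sums_sum Cauchy_product_sums summable_norm_mexp_entry)
    then have "(\<lambda>n. ((s + t) ^ n / fact n) *\<^sub>R mpow A n $ i $ j) sums
        (\<Sum>l\<in>UNIV. (\<Sum>k. a l k) * (\<Sum>k. b l k))"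
      by (simp only: a_def b_def Cauchy_product_mexp_entry)
    then show ?thesis
      unfolding a_def b_def by (simp add: sums_unique[symmetric] mexp_entry matrix_matrix_mult_def)
  qed
  then show ?thesis
    by (simp add: vec_eq_iff)
qed

lemma mexp_0: "mexp 0 A = mat 1"
proof -
  have "(\<lambda>k. ((0::real) ^ k / fact k) *\<^sub>R mpow A k) sums mpow A 0"
    using sums_single[of 0 "\<lambda>_. mpow A 0"] by (simp add: power_0_left if_distrib if_distribR cong: if_cong)
  then show ?thesis
    unfolding mexp_def by (simp add: sums_unique[symmetric] mpow_0)
qed

lemma mexp_mult_vector_nonzero:
  fixes A :: "complex^'n^'n"
  assumes "x \<noteq> 0"
  shows "mexp t A *v x \<noteq> 0"
proof
  assume "mexp t A *v x = 0"
  then have "(mexp (- t) A ** mexp t A) *v x = 0"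
    by (simp add: matrix_vector_mul_assoc[symmetric])
  with assms show False
    by (simp add: mexp_add mexp_0)
qed

lemma sum_matrix_vector_mult: "finite S \<Longrightarrow> sum F S *v x = (\<Sum>i\<in>S. F i *v x)"
  by (induction S rule: finite_induct) (simp_all add: matrix_vector_mult_add_rdistrib)

lemma outer_mult_vector: "outer a b *v x = rowmul b x *s a"
  by (simp add: vec_eq_iff outer_def rowmul_def matrix_vector_mult_def sum_distrib_left algebra_simps)

lemma rowmul_smult: "rowmul w (c *s x) = c * rowmul w x"
  by (simp add: rowmul_def sum_distrib_left algebra_simps)

lemma rowmul_sum: "finite S \<Longrightarrow> rowmul w (sum f S) = (\<Sum>i\<in>S. rowmul w (f i))"
  unfolding rowmul_def by (simp add: sum_component sum_distrib_left) (rule sum.swap)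

lemma rowmul_Q1_mult_vector:
  fixes v w :: "nat \<Rightarrow> nat \<Rightarrow> nat \<Rightarrow> complex^'n"
  assumes m_pos: "\<forall>i\<in>{1..p}. \<forall>j\<in>{1..d i}. 1 \<le> m i j"
    and dual: "\<forall>i\<in>{1..p}. \<forall>j\<in>{1..d i}. \<forall>k\<in>{1..m i j}.
               \<forall>i'\<in>{1..p}. \<forall>j'\<in>{1..d i'}. \<forall>k'\<in>{1..m i' j'}.
                 rowmul (w i j k) (v i' j' k') = (if (i, j, k) = (i', j', k') then 1 else 0)"
    and top: "(i0, j0) \<in> top_chains p lam d m"
  shows "rowmul (w i0 j0 1) (Q1 p lam d m v w t *v u)
    = exp (\<i> * complex_of_real (Im (lam i0) * t)) * rowmul (w i0 j0 (M1 p lam d m)) u"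
proof -
  let ?TC = "top_chains p lam d m" and ?M = "M1 p lam d m"
  let ?e = "\<lambda>i. exp (\<i> * complex_of_real (Im (lam i) * t))"
  have TC: "i \<in> {1..p} \<and> j \<in> {1..d i}" if "(i, j) \<in> ?TC" for i j
    using that by (auto simp: top_chains_def Lam1_def)
  have fin: "finite ?TC"
    by (rule finite_subset[of _ "Sigma {1..p} (\<lambda>i. {1..d i})"]) (auto dest: TC)
  have "Q1 p lam d m v w t *v u = (\<Sum>(i, j)\<in>?TC. (rowmul (w i j ?M) u * ?e i) *s v i j 1)"
    by (simp only: Q1_def sum_matrix_vector_mult[OF fin] case_prod_unfold outer_mult_vector
        vector_smult_assoc)
  then have "rowmul (w i0 j0 1) (Q1 p lam d m v w t *v u)
      = (\<Sum>(i, j)\<in>?TC. rowmul (w i j ?M) u * ?e i * rowmul (w i0 j0 1) (v i j 1))"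
    by (simp add: rowmul_sum[OF fin] rowmul_smult case_prod_unfold)
  also have "\<dots> = (\<Sum>q\<in>?TC. if q = (i0, j0) then rowmul (w i0 j0 ?M) u * ?e i0 else 0)"
  proof (intro sum.cong refl)
    fix q assume "q \<in> ?TC"
    moreover obtain i j where q: "q = (i, j)"
      by fastforce
    ultimately have "i \<in> {1..p}" "j \<in> {1..d i}"
      using TC by auto
    then have "rowmul (w i0 j0 1) (v i j 1) = (if (i0, j0, 1::nat) = (i, j, 1) then 1 else 0)"
      using dual m_pos TC[OF top] by (meson atLeastAtMost_iff order_refl)
    then show "(case q of (i, j) \<Rightarrow> rowmul (w i j ?M) u * ?e i * rowmul (w i0 j0 1) (v i j 1))
        = (if q = (i0, j0) then rowmul (w i0 j0 ?M) u * ?e i0 else 0)"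
      using q by auto
  qed
  also have "\<dots> = ?e i0 * rowmul (w i0 j0 ?M) u"
    using fin top by (simp add: sum.delta')
  finally show ?thesis .
qed

lemma Q1_mult_vector_nonzero:
  fixes v w :: "nat \<Rightarrow> nat \<Rightarrow> nat \<Rightarrow> complex^'n"
  assumes m_pos: "\<forall>i\<in>{1..p}. \<forall>j\<in>{1..d i}. 1 \<le> m i j"
    and dual: "\<forall>i\<in>{1..p}. \<forall>j\<in>{1..d i}. \<forall>k\<in>{1..m i j}.
               \<forall>i'\<in>{1..p}. \<forall>j'\<in>{1..d i'}. \<forall>k'\<in>{1..m i' j'}.
                 rowmul (w i j k) (v i' j' k') = (if (i, j, k) = (i', j', k') then 1 else 0)"
    and "RLGE p lam d m w u"
  shows "Q1 p lam d m v w t *v u \<noteq> 0"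
proof -
  obtain i0 j0 where top: "(i0, j0) \<in> top_chains p lam d m"
    and "rowmul (w i0 j0 (M1 p lam d m)) u \<noteq> 0"
    using assms(3) unfolding RLGE_def by blast
  then have "rowmul (w i0 j0 1) (Q1 p lam d m v w t *v u) \<noteq> 0"
    using rowmul_Q1_mult_vector[OF m_pos dual top, of t u] by simp
  then show ?thesis
    by (auto simp: rowmul_def)
qed

lemma RLGE_smult: "c \<noteq> 0 \<Longrightarrow> RLGE p lam d m w (c *s u) \<longleftrightarrow> RLGE p lam d m w u"
  by (simp add: RLGE_def rowmul_smult)

theorem mainTheorem3:
  fixes A :: "complex^'n^'n" and N :: "complex^'n \<Rightarrow> real" and y0 :: "complex^'n"
    and p :: nat and lam :: "nat \<Rightarrow> complex" and d :: "nat \<Rightarrow> nat"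
    and m :: "nat \<Rightarrow> nat \<Rightarrow> nat" and v w :: "nat \<Rightarrow> nat \<Rightarrow> nat \<Rightarrow> complex^'n"
  assumes norm: "is_vec_norm N"
    and y0: "y0 \<noteq> 0"
    and lam_distinct: "inj_on lam {1..p}"
    and d_pos: "\<forall>i\<in>{1..p}. 1 \<le> d i"
    and m_pos: "\<forall>i\<in>{1..p}. \<forall>j\<in>{1..d i}. 1 \<le> m i j"
    and chain1: "\<forall>i\<in>{1..p}. \<forall>j\<in>{1..d i}. A *v v i j 1 = lam i *s v i j 1"
    and chaink: "\<forall>i\<in>{1..p}. \<forall>j\<in>{1..d i}. \<forall>k\<in>{2..m i j}.
                   A *v v i j k = lam i *s v i j k + v i j (k - 1)"
    and dual: "\<forall>i\<in>{1..p}. \<forall>j\<in>{1..d i}. \<forall>k\<in>{1..m i j}.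
               \<forall>i'\<in>{1..p}. \<forall>j'\<in>{1..d i'}. \<forall>k'\<in>{1..m i' j'}.
                 rowmul (w i j k) (v i' j' k') = (if (i, j, k) = (i', j', k') then 1 else 0)"
    and span: "\<forall>x. x = (\<Sum>(i, j, k)\<in>{(i, j, k). i \<in> {1..p} \<and> j \<in> {1..d i} \<and> k \<in> {1..m i j}}.
                          rowmul (w i j k) x *s v i j k)"
  shows "(let S = (\<lambda>z0. Limsup at_top (\<lambda>t. ereal (K3 N A t y0 z0 / K2 N A t y0))) ` {z0. N z0 = 1}
          in 1 \<in> S \<and> (\<forall>s\<in>S. s \<le> 1))
     \<and> (RLGE p lam d m w y0 \<longrightarrow>
         (let S = (\<lambda>z0. Limsup at_top (\<lambda>t. ereal (Kinf3 N p lam d m v w t y0 z0 / Kinf2 N p lam d m v w t y0)))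
                   ` {z0. N z0 = 1}
          in 1 \<in> S \<and> (\<forall>s\<in>S. s \<le> 1)))"
proof -
  define u where "u = normalize N y0"
  have u: "u \<noteq> 0"
    using N_normalize[OF norm y0] N_0[OF norm] by (auto simp: u_def)
  have K: "K3 N A t y0 z / K2 N A t y0 = cond_ratio N (mexp t A) u z" for t z
    by (simp add: K3_def K2_def cond_ratio_def u_def)
  have Kinf: "Kinf3 N p lam d m v w t y0 z / Kinf2 N p lam d m v w t y0
      = cond_ratio N (Q1 p lam d m v w t) u z" for t z
    by (simp add: Kinf3_def Kinf2_def cond_ratio_def u_def)
  have "\<exists>\<^sub>F t in at_top. mexp t A *v u \<noteq> 0"
    using mexp_mult_vector_nonzero[OF u] by (auto intro!: eventually_frequently always_eventually)
  moreover have "\<exists>\<^sub>F t in at_top. Q1 p lam d m v w t *v u \<noteq> 0" if "RLGE p lam d m w y0"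
    using that N_pos[OF norm y0] Q1_mult_vector_nonzero[OF m_pos dual]
    by (auto simp: u_def normalize_def RLGE_smult intro!: eventually_frequently always_eventually)
  ultimately show ?thesis
    unfolding K Kinf
    using max_Limsup_cond_ratio_eq_1[OF norm, of "\<lambda>t. mexp t A" u]
      max_Limsup_cond_ratio_eq_1[OF norm, of "Q1 p lam d m v w" u] by blast
qed

end
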